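(* Let $d\ge 3$ be a prime, $\omega=e^{2\pi i/d}$, and $-\frac{1}{d^2-1}\le p\le 1$. Let $\rho_{AB}=p\,|\Psi^+\rangle\langle\Psi^+|+(1-p)\frac{\mathbb{I}}{d^2}$ on $\mathbb{C}^d\otimes\mathbb{C}^d$, where $|\Psi^+\rangle=\frac{1}{\sqrt d}\sum_{i=0}^{d-1}|ii\rangle$. Let $M_1,\dots,M_{d+1}$ be the $d+1$ mutually unbiased bases consisting of the computational basis $\{|0\rangle,\dots,|d-1\rangle\}$, the Fourier basis $\{\mathcal{F}|l\rangle\}_{l=0}^{d-1}$, and the bases $\{D^k\mathcal{F}|l\rangle\}_{l=0}^{d-1}$ for $k=1,\dots,d-1$. Then $$I(A:B)\ \ge\ \sum_{i=1}^{d+1} I(M_i^A:M_i^B)\ \ge\ \min_{\mathcal{S}\subseteq\{1,\dots,d+1\},\,|\mathcal{S}|=d}\ \sum_{i\in\mathcal{S}} I(M_i^A:M_i^B).$$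
   Context: Logarithms are base 2, $0\log0=0$. $\mathcal{F}=\frac{1}{\sqrt d}\sum_{x,y=0}^{d-1}\omega^{xy}|x\rangle\langle y|$, $D=\mathrm{diag}(\omega^{j^2})_{j=0}^{d-1}$. $I(A:B)=H(A)+H(B)-H(AB)$ with von Neumann entropies. For a basis $\{|m_j\rangle\}$, $M^A,M^B$ are the outcomes when both parties measure their subsystem in that basis, with joint distribution $p(j,k)=\langle m_j\otimes m_k|\rho_{AB}|m_j\otimes m_k\rangle$, and $I(M^A:M^B)$ is the classical (Shannon) mutual information of this distribution. *)

theory Defs
  imports "Jordan_Normal_Form.Char_Poly" "HOL-Computational_Algebra.Fundamental_Theorem_Algebra"
begin

text \<open>Conventions. Operators on C^d (x) C^d are complex (d*d)x(d*d) matrices;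
  the basis vector |a>|b> (0 <= a,b < d) has index a*d+b.
  Logarithms are base 2 and 0 log 0 = 0.\<close>

definition ent_term :: "real \<Rightarrow> real" where
  "ent_term x = (if x = 0 then 0 else - x * log 2 x)"

text \<open>For the Hermitian matrices considered all eigenvalues are real.\<close>
definition vn_entropy :: "complex mat \<Rightarrow> real" where
  "vn_entropy \<rho> = (\<Sum>e\<in># proots (char_poly \<rho>). ent_term (Re e))"

definition ptrace_B :: "nat \<Rightarrow> complex mat \<Rightarrow> complex mat" where
  "ptrace_B d \<rho> = mat d d (\<lambda>(a, a'). \<Sum>b<d. \<rho> $$ (a*d+b, a'*d+b))"

definition ptrace_A :: "nat \<Rightarrow> complex mat \<Rightarrow> complex mat" where
  "ptrace_A d \<rho> = mat d d (\<lambda>(b, b'). \<Sum>a<d. \<rho> $$ (a*d+b, a*d+b'))"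

definition quantum_MI :: "nat \<Rightarrow> complex mat \<Rightarrow> real" where
  "quantum_MI d \<rho> = vn_entropy (ptrace_B d \<rho>) + vn_entropy (ptrace_A d \<rho>) - vn_entropy \<rho>"

definition iso_state :: "nat \<Rightarrow> real \<Rightarrow> complex mat" where
  "iso_state d p = mat (d*d) (d*d) (\<lambda>(r, c).
     complex_of_real p * (if r div d = r mod d \<and> c div d = c mod d then 1 / of_nat d else 0)
     + complex_of_real (1 - p) * (if r = c then 1 / of_nat (d^2) else 0))"

definition omega :: "nat \<Rightarrow> complex" where
  "omega d = cis (2 * pi / real d)"

text \<open>The MUBs M_1,...,M_{d+1}: mub d i l is the l-th basis vector of M_i, as
  a coefficient function x |-> <x|m_l>.
  M_1 = computational basis, M_2 = Fourier basis F|l>, M_{k+2} = D^k F|l>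
  for k = 1..d-1 (note M_2 is the case k = 0 of D^k F|l>).
  F|l> = 1/sqrt d sum_x omega^(x l) |x>, D|x> = omega^(x^2) |x>.\<close>
definition mub :: "nat \<Rightarrow> nat \<Rightarrow> nat \<Rightarrow> nat \<Rightarrow> complex" where
  "mub d i l x = (if i = 1 then (if x = l then 1 else 0)
     else omega d ^ ((i - 2) * x^2) * omega d ^ (x * l) / complex_of_real (sqrt (real d)))"

definition joint_prob :: "nat \<Rightarrow> complex mat \<Rightarrow> nat \<Rightarrow> nat \<Rightarrow> nat \<Rightarrow> real" where
  "joint_prob d \<rho> i j k = Re (\<Sum>a<d. \<Sum>b<d. \<Sum>a'<d. \<Sum>b'<d.
      cnj (mub d i j a * mub d i k b) * \<rho> $$ (a*d+b, a'*d+b') * (mub d i j a' * mub d i k b'))"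

definition shannon_H :: "'a set \<Rightarrow> ('a \<Rightarrow> real) \<Rightarrow> real" where
  "shannon_H S q = (\<Sum>x\<in>S. ent_term (q x))"

definition classical_MI :: "nat \<Rightarrow> complex mat \<Rightarrow> nat \<Rightarrow> real" where
  "classical_MI d \<rho> i =
     shannon_H {..<d} (\<lambda>j. \<Sum>k<d. joint_prob d \<rho> i j k)
   + shannon_H {..<d} (\<lambda>k. \<Sum>j<d. joint_prob d \<rho> i j k)
   - shannon_H ({..<d} \<times> {..<d}) (\<lambda>(j, k). joint_prob d \<rho> i j k)"

end

theory Submission
  imports Defs "HOL-Library.Real_Mod" "HOL-Real_Asymp.Real_Asymp"
begin

(* For the isotropic state everything is computable in closed form. Its spectrum is
   (1 + (d^2 - 1) p) / d^2 once and (1 - p) / d^2 with multiplicity d^2 - 1 (it is a scalar plus a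
   rank one matrix) and both marginals are maximally mixed, so I(A:B) = 2 log d - S(rho). Measured
   in the computational or in the Fourier basis, the outcome distribution puts (1 + (d - 1) p) / d^2
   on the graph of a permutation and (1 - p) / d^2 elsewhere. For the bases D^k F the overlaps are
   quadratic Gauss sums of modulus sqrt d (d an odd prime), so the outcomes are uniform and carry no
   information. Both claims thus reduce to I(M_1) + I(M_2) <= I(A:B), an inequality in one real
   variable p; multiplied by ln 2, the difference vanishes at p = 0 together with its derivative and
   at p = 1, is convex left of 1 / (d + 1) and concave right of it. The minimum over d-element
   subsets is at most the full sum because one summand vanishes. *)

lemma Min_sums_card_minus_one_le_sum:
  fixes f :: "'a \<Rightarrow> 'b::{linorder, comm_monoid_add}"
  assumes "finite I" "i \<in> I" "f i = 0"
  shows "Min {(\<Sum>j\<in>S. f j) | S. S \<subseteq> I \<and> card S = card I - 1} \<le> (\<Sum>j\<in>I. f j)"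
proof (rule Min_le)
  have "{(\<Sum>j\<in>S. f j) | S. S \<subseteq> I \<and> card S = card I - 1} \<subseteq> (\<lambda>S. \<Sum>j\<in>S. f j) ` Pow I"
    by auto
  then show "finite {(\<Sum>j\<in>S. f j) | S. S \<subseteq> I \<and> card S = card I - 1}"
    by (rule finite_subset) (use assms(1) in simp)
  have "(\<Sum>j\<in>I. f j) = (\<Sum>j\<in>I - {i}. f j)"
    using assms by (simp add: sum.remove)
  moreover have "I - {i} \<subseteq> I" "card (I - {i}) = card I - 1"
    using assms by auto
  ultimately show "(\<Sum>j\<in>I. f j) \<in> {(\<Sum>j\<in>S. f j) | S. S \<subseteq> I \<and> card S = card I - 1}"
    by blast
qed

section \<open>Roots of unity and quadratic Gauss sums\<close>

definition unity_root :: "nat \<Rightarrow> int \<Rightarrow> complex" where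
  "unity_root d k = cis (2 * pi * of_int k / real d)"

lemma unity_root_add: "unity_root d (a + b) = unity_root d a * unity_root d b"
  unfolding unity_root_def cis_mult by (simp add: add_divide_distrib distrib_left)

lemma unity_root_0 [simp]: "unity_root d 0 = 1"
  by (simp add: unity_root_def)

lemma cnj_unity_root: "cnj (unity_root d k) = unity_root d (- k)"
  by (simp add: unity_root_def cis_cnj)

lemma norm_unity_root [simp]: "norm (unity_root d k) = 1"
  by (simp add: unity_root_def)

lemma omega_power: "omega d ^ m = unity_root d (int m)"
  by (simp add: omega_def unity_root_def DeMoivre mult.commute)

lemma unity_root_eq_1_iff:
  assumes "d > 0"
  shows "unity_root d k = 1 \<longleftrightarrow> int d dvd k"
proof
  assume "unity_root d k = 1"
  then obtain n where "2 * pi * of_int k / real d = of_int n * (2 * pi)"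
    unfolding unity_root_def cis_eq_1_iff by blast
  then have "real_of_int k = of_int (n * int d)"
    using assms by (simp add: field_simps)
  then show "int d dvd k"
    by (simp only: of_int_eq_iff) simp
next
  assume "int d dvd k"
  then obtain n where "k = int d * n" ..
  then show "unity_root d k = 1"
    using assms unfolding unity_root_def cis_eq_1_iff by (intro exI[of _ n]) simp
qed

lemma unity_root_add_multiple:
  assumes "d > 0"
  shows "unity_root d (k + int d * n) = unity_root d k"
  using unity_root_eq_1_iff[OF assms, of "int d * n"] by (simp add: unity_root_add)

lemma sum_unity_root_linear:
  assumes "d > 0"
  shows "(\<Sum>y<d. unity_root d (m * int y)) = (if int d dvd m then of_nat d else 0)"
proof (cases "int d dvd m")
  case True
  then have "unity_root d (m * int y) = 1" for y
    unfolding unity_root_eq_1_iff[OF assms] by (rule dvd_mult2)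
  then show ?thesis
    using True by simp
next
  case False
  define z where "z = unity_root d m"
  have power: "unity_root d (m * int y) = z ^ y" for y
    unfolding z_def by (induction y) (simp_all add: distrib_left unity_root_add mult.commute)
  have "z \<noteq> 1"
    using False unity_root_eq_1_iff[OF assms] by (simp add: z_def)
  moreover have "z ^ d = 1"
    using unity_root_eq_1_iff[OF assms, of "m * int d"] by (simp add: power[symmetric])
  ultimately show ?thesis
    using False by (simp add: power sum_gp_strict)
qed

lemma sum_periodic_shift:
  fixes g :: "int \<Rightarrow> 'a::comm_monoid_add"
  assumes "d > 0" and periodic: "\<And>k. g (k mod int d) = g k"
  shows "(\<Sum>t<d. g (c + int t)) = (\<Sum>x<d. g (int x))"
  by (rule sum.reindex_bij_witness[where i = "\<lambda>x. nat ((int x - c) mod int d)"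
        and j = "\<lambda>t. nat ((c + int t) mod int d)"])
     (use assms in \<open>auto simp: nat_less_iff mod_add_right_eq mod_diff_left_eq\<close>)

lemma unity_root_quadratic_mod:
  assumes "d > 0"
  shows "unity_root d (A * (k mod int d) ^ 2 + B * (k mod int d) - C) = unity_root d (A * k ^ 2 + B * k - C)"
proof -
  define r q where "r = k mod int d" and "q = k div int d"
  have "k = r + int d * q"
    by (simp add: r_def q_def)
  then have "A * k ^ 2 + B * k - C = (A * r ^ 2 + B * r - C) + int d * (A * (2 * r * q + int d * q ^ 2) + B * q)"
    by (simp add: algebra_simps power2_eq_square)
  then show ?thesis
    unfolding r_def by (simp only: unity_root_add_multiple[OF assms])
qed

text \<open>Expand the square, substitute \<open>x = y + t\<close>, and sum over \<open>y\<close> first: the cross term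
  \<open>2 A t y\<close> kills every \<open>t \<noteq> 0\<close> because \<open>d\<close> is an odd prime not dividing \<open>A\<close>.\<close>
lemma quadratic_gauss_sum_mult_cnj:
  assumes "prime d" "d > 2" and A: "\<not> int d dvd A"
  shows "(\<Sum>x<d. unity_root d (A * int x ^ 2 + B * int x))
       * cnj (\<Sum>x<d. unity_root d (A * int x ^ 2 + B * int x)) = of_nat d"
proof -
  have d: "d > 0" using assms by simp
  define f where "f k = A * k ^ 2 + B * k" for k
  have "(\<Sum>x<d. unity_root d (f (int x))) * cnj (\<Sum>x<d. unity_root d (f (int x)))
      = (\<Sum>y<d. \<Sum>x<d. unity_root d (f (int x) - f (int y)))"
    unfolding cnj_sum sum_product
    by (subst sum.swap) (simp add: cnj_unity_root unity_root_add[symmetric])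
  also have "\<dots> = (\<Sum>y<d. \<Sum>t<d. unity_root d (f (int y + int t) - f (int y)))"
  proof (rule sum.cong[OF refl])
    fix y
    show "(\<Sum>x<d. unity_root d (f (int x) - f (int y))) = (\<Sum>t<d. unity_root d (f (int y + int t) - f (int y)))"
      using unity_root_quadratic_mod[OF d, of A _ B "f (int y)"]
      by (intro sum_periodic_shift[OF d, where g = "\<lambda>k. unity_root d (f k - f (int y))", symmetric])
        (simp add: f_def)
  qed
  also have "\<dots> = (\<Sum>t<d. unity_root d (f (int t)) * (\<Sum>y<d. unity_root d (2 * A * int t * int y)))"
    by (subst sum.swap) (simp add: sum_distrib_left f_def unity_root_add[symmetric] algebra_simps
        power2_eq_square)
  also have "\<dots> = (\<Sum>t<d. if t = 0 then of_nat d else 0)"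
  proof (rule sum.cong[OF refl])
    fix t assume t: "t \<in> {..<d}"
    have "\<not> int d dvd 2"
      using \<open>d > 2\<close> by (auto dest: zdvd_imp_le)
    then have "int d dvd 2 * A * int t \<longleftrightarrow> t = 0"
      using A t \<open>prime d\<close> by (auto simp: prime_dvd_mult_iff dest: dvd_imp_le)
    then show "unity_root d (f (int t)) * (\<Sum>y<d. unity_root d (2 * A * int t * int y))
        = (if t = 0 then of_nat d else 0)"
      using sum_unity_root_linear[OF d, of "2 * A * int t"] by (auto simp: f_def)
  qed
  also have "\<dots> = of_nat d"
    using d by simp
  finally show ?thesis
    unfolding f_def .
qed

section \<open>Measurement statistics of the isotropic state\<close>

lemma pair_index_less:
  fixes a b d :: nat
  assumes "a < d" "b < d"
  shows "a * d + b < d * d"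
proof -
  have "a * d + b < (a + 1) * d"
    using assms(2) by simp
  also have "\<dots> \<le> d * d"
    using assms(1) by (intro mult_right_mono) auto
  finally show ?thesis .
qed

lemma pair_index_eq_iff:
  fixes a b a' b' d :: nat
  assumes "b < d" "b' < d"
  shows "a * d + b = a' * d + b' \<longleftrightarrow> a = a' \<and> b = b'"
proof
  assume "a * d + b = a' * d + b'"
  then have "(a * d + b) div d = (a' * d + b') div d" "(a * d + b) mod d = (a' * d + b') mod d"
    by simp_all
  then show "a = a' \<and> b = b'"
    using assms by simp
qed simp

lemma iso_state_entry:
  assumes "a < d" "b < d" "a' < d" "b' < d"
  shows "iso_state d p $$ (a * d + b, a' * d + b') =
      (if a = b \<and> a' = b' then complex_of_real p / of_nat d else 0)
    + (if a = a' \<and> b = b' then complex_of_real (1 - p) / of_nat d ^ 2 else 0)"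
  using assms pair_index_less[OF assms(1,2)] pair_index_less[OF assms(3,4)]
  by (simp add: iso_state_def pair_index_eq_iff)

lemma sum_if_const: "(\<Sum>x\<in>A. if P then f x else 0) = (if P then sum f A else 0)"
  by simp

lemma iso_state_product_expectation:
  fixes f g :: "nat \<Rightarrow> complex"
  shows "Re (\<Sum>a<d. \<Sum>b<d. \<Sum>a'<d. \<Sum>b'<d.
      cnj (f a * g b) * iso_state d p $$ (a * d + b, a' * d + b') * (f a' * g b'))
    = p / d * (cmod (\<Sum>a<d. f a * g a))\<^sup>2
      + (1 - p) / (real d)\<^sup>2 * (\<Sum>a<d. (cmod (f a))\<^sup>2) * (\<Sum>b<d. (cmod (g b))\<^sup>2)"
proof -
  let ?X = "\<lambda>a b a' b'. cnj (f a * g b) * (f a' * g b')"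
  \<comment> \<open>conditions nested so that every inner sum is a Kronecker delta\<close>
  have "(\<Sum>a<d. \<Sum>b<d. \<Sum>a'<d. \<Sum>b'<d.
      cnj (f a * g b) * iso_state d p $$ (a * d + b, a' * d + b') * (f a' * g b'))
    = (\<Sum>a<d. \<Sum>b<d. \<Sum>a'<d. \<Sum>b'<d.
        (if a' = b' then if a = b then complex_of_real p / of_nat d * ?X a b a' b' else 0 else 0)
      + (if b = b' then if a = a' then complex_of_real (1 - p) / of_nat d ^ 2 * ?X a b a' b' else 0 else 0))"
    by (intro sum.cong refl) (simp add: iso_state_entry; simp add: algebra_simps)
  also have "\<dots> = complex_of_real p / of_nat d * (\<Sum>a<d. \<Sum>a'<d. ?X a a a' a')
      + complex_of_real (1 - p) / of_nat d ^ 2 * (\<Sum>a<d. \<Sum>b<d. ?X a b a b)"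
    by (simp add: sum.distrib sum_distrib_left sum_if_const)
  also have "(\<Sum>a<d. \<Sum>a'<d. ?X a a a' a') = complex_of_real ((cmod (\<Sum>a<d. f a * g a))\<^sup>2)"
  proof -
    have "(\<Sum>a<d. \<Sum>a'<d. ?X a a a' a') = cnj (\<Sum>a<d. f a * g a) * (\<Sum>a<d. f a * g a)"
      by (simp add: sum_product)
    then show ?thesis
      by (metis complex_norm_square mult.commute)
  qed
  also have "(\<Sum>a<d. \<Sum>b<d. ?X a b a b)
      = complex_of_real ((\<Sum>a<d. (cmod (f a))\<^sup>2) * (\<Sum>b<d. (cmod (g b))\<^sup>2))"
  proof -
    have "?X a b a b = complex_of_real ((cmod (f a))\<^sup>2 * (cmod (g b))\<^sup>2)" for a b
      by (simp only: of_real_mult complex_norm_square) (simp add: mult_ac)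
    then show ?thesis
      by (simp add: sum_product)
  qed
  finally show ?thesis
    by simp
qed

lemma mub_eq_unity_root:
  assumes "i \<noteq> 1"
  shows "mub d i l x = unity_root d (int ((i - 2) * x ^ 2 + x * l)) / complex_of_real (sqrt d)"
  using assms by (simp add: mub_def omega_power unity_root_add)

lemma of_real_sqrt_of_nat_power2: "complex_of_real (sqrt (real d)) ^ 2 = of_nat d"
  by (simp flip: of_real_power)

lemma norm_mub_sq:
  assumes "i \<noteq> 1"
  shows "(cmod (mub d i l x))\<^sup>2 = 1 / d"
  using assms by (simp add: mub_eq_unity_root norm_divide power_divide)

lemma sum_norm_mub_sq:
  assumes "l < d"
  shows "(\<Sum>x<d. (cmod (mub d i l x))\<^sup>2) = 1"
proof (cases "i = 1")
  case True
  then have "(cmod (mub d i l x))\<^sup>2 = (if x = l then 1 else 0)" for x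
    by (simp add: mub_def)
  then show ?thesis
    using assms by simp
next
  case False
  then show ?thesis
    using assms by (simp add: norm_mub_sq)
qed

lemma mub_overlap:
  assumes "i \<noteq> 1"
  shows "(\<Sum>x<d. mub d i j x * mub d i k x)
    = (\<Sum>x<d. unity_root d (int (2 * (i - 2)) * int x ^ 2 + int (j + k) * int x)) / of_nat d"
proof -
  have "mub d i j x * mub d i k x
      = unity_root d (int (2 * (i - 2)) * int x ^ 2 + int (j + k) * int x) / of_nat d" for x
  proof -
    have "mub d i j x * mub d i k x
        = unity_root d (int ((i - 2) * x ^ 2 + x * j) + int ((i - 2) * x ^ 2 + x * k)) / of_nat d"
      by (simp only: mub_eq_unity_root[OF assms] times_divide_times_eq unity_root_add
          power2_eq_square[symmetric] of_real_sqrt_of_nat_power2)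
    also have "int (m * x ^ 2 + x * j) + int (m * x ^ 2 + x * k)
        = int (2 * m) * int x ^ 2 + int (j + k) * int x" for m
      by (simp add: algebra_simps)
    finally show ?thesis .
  qed
  then show ?thesis
    by (simp add: sum_divide_distrib)
qed

lemma joint_prob_iso_state:
  assumes "j < d" "k < d"
  shows "joint_prob d (iso_state d p) i j k
    = p / d * (cmod (\<Sum>x<d. mub d i j x * mub d i k x))\<^sup>2 + (1 - p) / (real d)\<^sup>2"
  unfolding joint_prob_def iso_state_product_expectation using assms by (simp add: sum_norm_mub_sq)

lemma joint_prob_iso_computational:
  assumes "j < d" "k < d"
  shows "joint_prob d (iso_state d p) 1 j k
    = (if k = j then (1 + (real d - 1) * p) / (real d)\<^sup>2 else (1 - p) / (real d)\<^sup>2)"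
proof -
  have "(\<Sum>x<d. mub d 1 j x * mub d 1 k x) = (\<Sum>x<d. if x = j then (if k = j then 1 else 0) else 0)"
    by (intro sum.cong) (auto simp: mub_def)
  then show ?thesis
    using assms by (simp add: joint_prob_iso_state field_simps power2_eq_square)
qed

lemma dvd_add_iff_eq_minus_mod:
  fixes d j k :: nat
  assumes "j < d" "k < d"
  shows "d dvd j + k \<longleftrightarrow> k = (d - j) mod d"
proof (cases "j = 0")
  case True
  then show ?thesis
    using assms by (auto dest: dvd_imp_le)
next
  case False
  have "d dvd j + k \<longleftrightarrow> j + k = d"
  proof
    assume "d dvd j + k"
    then obtain c where c: "j + k = d * c" ..
    with False assms have "0 < c" "c < 2"
      by (auto intro!: Nat.gr0I) (metis c add_less_mono mult_2_right mult_less_cancel1)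
    then show "j + k = d"
      using c by (simp add: less_2_cases_iff)
  qed simp
  then show ?thesis
    using False assms by auto
qed

lemma joint_prob_iso_fourier:
  assumes "j < d" "k < d"
  shows "joint_prob d (iso_state d p) 2 j k
    = (if k = (d - j) mod d then (1 + (real d - 1) * p) / (real d)\<^sup>2 else (1 - p) / (real d)\<^sup>2)"
proof -
  have "d > 0"
    using assms by simp
  have "(\<Sum>x<d. mub d 2 j x * mub d 2 k x) = (\<Sum>x<d. unity_root d (int (j + k) * int x)) / of_nat d"
    by (simp add: mub_overlap del: of_nat_add)
  also have "\<dots> = (if d dvd j + k then 1 else 0)"
    unfolding sum_unity_root_linear[OF \<open>d > 0\<close>] int_dvd_int_iff using \<open>d > 0\<close> by simp
  finally show ?thesis
    using assms by (simp add: joint_prob_iso_state dvd_add_iff_eq_minus_mod field_simps power2_eq_square)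
qed

lemma joint_prob_iso_quadratic_phase:
  assumes "prime d" "d > 2" "3 \<le> i" "i \<le> d + 1" "j < d" "k < d"
  shows "joint_prob d (iso_state d p) i j k = 1 / (real d)\<^sup>2"
proof -
  define G where "G = (\<Sum>x<d. unity_root d (int (2 * (i - 2)) * int x ^ 2 + int (j + k) * int x))"
  have "\<not> d dvd 2 * (i - 2)"
    using assms by (auto simp: prime_dvd_mult_iff dest: dvd_imp_le)
  then have "\<not> int d dvd int (2 * (i - 2))"
    unfolding int_dvd_int_iff .
  then have "G * cnj G = of_nat d"
    unfolding G_def by (rule quadratic_gauss_sum_mult_cnj[OF assms(1,2)])
  then have "(cmod G)\<^sup>2 = d"
    by (metis complex_norm_square of_real_eq_iff of_real_of_nat_eq)
  moreover have "(\<Sum>x<d. mub d i j x * mub d i k x) = G / of_nat d"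
    unfolding G_def using assms by (intro mub_overlap) simp
  ultimately have "(cmod (\<Sum>x<d. mub d i j x * mub d i k x))\<^sup>2 = 1 / d"
    by (simp add: norm_divide power_divide power2_eq_square)
  then show ?thesis
    using assms by (simp add: joint_prob_iso_state field_simps power2_eq_square)
qed

lemma sum_if_eq_lessThan:
  fixes X Y :: real
  assumes "k0 < d"
  shows "(\<Sum>k<d. if k = k0 then X else Y) = X + (real d - 1) * Y"
proof -
  have "(\<Sum>k<d. if k = k0 then X else Y) = X + (\<Sum>k\<in>{..<d} - {k0}. Y)"
    using assms by (subst sum.delta_remove) auto
  then show ?thesis
    using assms by simp
qed

lemma classical_MI_permutation_pattern:
  assumes perm: "bij_betw \<sigma> {..<d} {..<d}"
    and joint: "\<And>j k. j < d \<Longrightarrow> k < d \<Longrightarrow> joint_prob d \<rho> i j k = (if k = \<sigma> j then X else Y)"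
  shows "classical_MI d \<rho> i
    = 2 * real d * ent_term (X + (real d - 1) * Y) - real d * (ent_term X + (real d - 1) * ent_term Y)"
proof -
  have \<sigma>: "\<sigma> j < d" if "j < d" for j
    using perm that by (auto dest: bij_betw_apply)
  have row: "(\<Sum>k<d. joint_prob d \<rho> i j k) = X + (real d - 1) * Y"
    and row_entropy: "(\<Sum>k<d. ent_term (joint_prob d \<rho> i j k)) = ent_term X + (real d - 1) * ent_term Y"
    if "j < d" for j
    using that joint \<sigma> sum_if_eq_lessThan[OF \<sigma>[OF that]] by (simp_all add: if_distrib[of ent_term])
  have col: "(\<Sum>j<d. joint_prob d \<rho> i j k) = X + (real d - 1) * Y" if "k < d" for k
  proof -
    have "(\<Sum>j<d. joint_prob d \<rho> i j k) = (\<Sum>j<d. if k = \<sigma> j then X else Y)"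
      using that joint by simp
    also have "\<dots> = (\<Sum>l<d. if k = l then X else Y)"
      by (rule sum.reindex_bij_betw[OF perm])
    finally show ?thesis
      using sum_if_eq_lessThan[OF that] by (simp add: eq_commute[of k])
  qed
  have joint_entropy: "shannon_H ({..<d} \<times> {..<d}) (\<lambda>(j, k). joint_prob d \<rho> i j k)
      = (\<Sum>j<d. \<Sum>k<d. ent_term (joint_prob d \<rho> i j k))"
    by (simp add: shannon_H_def sum.cartesian_product split_def)
  show ?thesis
    unfolding classical_MI_def joint_entropy using row col row_entropy by (simp add: shannon_H_def)
qed

lemma mult_ent_term_inverse:
  assumes "x > 0"
  shows "x * ent_term (1 / x) = log 2 x"
  using assms by (simp add: ent_term_def log_divide)

lemma bij_betw_minus_mod:
  fixes d :: nat
  shows "bij_betw (\<lambda>j. (d - j) mod d) {..<d} {..<d}"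
proof -
  have maps: "(\<lambda>j. (d - j) mod d) \<in> {..<d} \<rightarrow> {..<d}"
    by (intro funcsetI) simp
  have involution: "(d - (d - j) mod d) mod d = j" if "j \<in> {..<d}" for j
    using that by (cases "j = 0") simp_all
  show ?thesis
    by (rule bij_betwI[OF maps maps involution involution])
qed

lemma classical_MI_iso_state_computational_fourier:
  assumes "d > 0" "i \<in> {1, 2}"
  shows "classical_MI d (iso_state d p) i
    = 2 * log 2 d - d * (ent_term ((1 + (real d - 1) * p) / (real d)\<^sup>2)
        + (real d - 1) * ent_term ((1 - p) / (real d)\<^sup>2))"
proof -
  let ?X = "(1 + (real d - 1) * p) / (real d)\<^sup>2" and ?Y = "(1 - p) / (real d)\<^sup>2"
  have "classical_MI d (iso_state d p) i
      = 2 * real d * ent_term (?X + (real d - 1) * ?Y) - real d * (ent_term ?X + (real d - 1) * ent_term ?Y)"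
  proof (cases "i = 1")
    case True
    then show ?thesis
      using bij_betw_id joint_prob_iso_computational
      by (intro classical_MI_permutation_pattern[where \<sigma> = id]) auto
  next
    case False
    with assms have "i = 2"
      by auto
    then show ?thesis
      using bij_betw_minus_mod joint_prob_iso_fourier
      by (intro classical_MI_permutation_pattern[where \<sigma> = "\<lambda>j. (d - j) mod d"]) auto
  qed
  also have "?X + (real d - 1) * ?Y = 1 / d"
    using assms by (simp add: field_simps power2_eq_square)
  finally show ?thesis
    using mult_ent_term_inverse[of "real d"] assms by simp
qed

lemma classical_MI_iso_state_quadratic_phase:
  assumes "prime d" "d > 2" "3 \<le> i" "i \<le> d + 1"
  shows "classical_MI d (iso_state d p) i = 0"
proof -
  let ?Y = "1 / (real d)\<^sup>2"
  have "classical_MI d (iso_state d p) i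
      = 2 * real d * ent_term (?Y + (real d - 1) * ?Y) - real d * (ent_term ?Y + (real d - 1) * ent_term ?Y)"
    using assms joint_prob_iso_quadratic_phase
    by (intro classical_MI_permutation_pattern[where \<sigma> = id]) auto
  also have "?Y + (real d - 1) * ?Y = 1 / d"
    using assms by (simp add: field_simps power2_eq_square)
  also have "real d * (ent_term ?Y + (real d - 1) * ent_term ?Y) = (real d)\<^sup>2 * ent_term (1 / (real d)\<^sup>2)"
    by (simp add: algebra_simps power2_eq_square)
  finally show ?thesis
    using mult_ent_term_inverse[of "real d"] mult_ent_term_inverse[of "(real d)\<^sup>2"] assms
    by (simp add: log_mult power2_eq_square)
qed

section \<open>Von Neumann entropies\<close>

lemma proots_prod_linear_factors: "proots (\<Prod>a\<leftarrow>xs. [:- a, 1:]) = mset (xs :: 'a::idom list)"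
proof (induction xs)
  case (Cons a xs)
  have "(\<Prod>a\<leftarrow>xs. [:- a, 1:]) \<noteq> 0"
    by auto
  then show ?case
    using Cons.IH by (simp add: proots_mult del: mult_pCons_left)
qed simp

lemma vn_entropy_upper_triangular:
  assumes "A \<in> carrier_mat n n" "upper_triangular A"
  shows "vn_entropy A = (\<Sum>i<n. ent_term (Re (A $$ (i, i))))"
proof -
  have "proots (char_poly A) = mset (diag_mat A)"
    unfolding char_poly_upper_triangular[OF assms] by (rule proots_prod_linear_factors)
  then show ?thesis
    using assms(1) by (simp add: vn_entropy_def diag_mat_def sum_mset_sum_list sum_list_sum_nth
        lessThan_atLeast0 flip: mset_map)
qed

lemma vn_entropy_similar: "similar_mat A B \<Longrightarrow> vn_entropy A = vn_entropy B"
  by (simp add: vn_entropy_def char_poly_similar)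

lemma index_mult_mat_mat:
  assumes "i < n" "j < n"
  shows "(mat n n f * mat n n g) $$ (i, j) = (\<Sum>k<n. f (i, k) * g (k, j))"
  using assms by (simp add: scalar_prod_def lessThan_atLeast0)

lemma one_plus_column_zero_mult_inverse:
  fixes e :: "nat \<Rightarrow> 'a::comm_ring_1" and n :: nat
  assumes "e 0 = 0"
  defines "P \<equiv> mat n n (\<lambda>(r, k). (if r = k then 1 else 0) + (if k = 0 then e r else 0))"
    and "Q \<equiv> mat n n (\<lambda>(r, k). (if r = k then 1 else 0) - (if k = 0 then e r else 0))"
  shows "P * Q = 1\<^sub>m n" and "Q * P = 1\<^sub>m n"
proof -
  show "P * Q = 1\<^sub>m n"
  proof (rule eq_matI)
    fix r s assume "r < dim_row (1\<^sub>m n :: 'a mat)" "s < dim_col (1\<^sub>m n :: 'a mat)"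
    then show "(P * Q) $$ (r, s) = 1\<^sub>m n $$ (r, s)"
      unfolding P_def Q_def using assms by (subst index_mult_mat_mat) (auto simp: algebra_simps
          sum.distrib sum_subtractf if_distrib[of "\<lambda>x. x * _"] cong: if_cong)
  qed (simp_all add: P_def Q_def)
  show "Q * P = 1\<^sub>m n"
  proof (rule eq_matI)
    fix r s assume "r < dim_row (1\<^sub>m n :: 'a mat)" "s < dim_col (1\<^sub>m n :: 'a mat)"
    then show "(Q * P) $$ (r, s) = 1\<^sub>m n $$ (r, s)"
      unfolding P_def Q_def using assms by (subst index_mult_mat_mat) (auto simp: algebra_simps
          sum.distrib sum_subtractf if_distrib[of "\<lambda>x. x * _"] cong: if_cong)
  qed (simp_all add: P_def Q_def)
qed

text \<open>With \<open>P = 1 + E\<close>, where \<open>E\<close> has the single column \<open>v - e\<^sub>0\<close> in position 0 (so \<open>E\<^sup>2 = 0\<close>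
  and \<open>P e\<^sub>0 = v\<close>), conjugating \<open>c I + q v v\<^sup>T\<close> by \<open>P\<close> moves the rank one part into row 0.\<close>
lemma scalar_plus_rank_one_similar_upper_triangular:
  fixes c q :: "'a::field" and v :: "nat \<Rightarrow> 'a"
  assumes n: "0 < n" and v0: "v 0 = 1"
  obtains T where "similar_mat (mat n n (\<lambda>(r, s). c * (if r = s then 1 else 0) + q * (v r * v s))) T"
    and "T \<in> carrier_mat n n" and "upper_triangular T"
    and "T $$ (0, 0) = c + q * (\<Sum>k<n. v k * v k)"
    and "\<And>i. 0 < i \<Longrightarrow> i < n \<Longrightarrow> T $$ (i, i) = c"
proof
  define e where "e r = (if r = 0 then 0 else v r)" for r
  define w where "w s = v s + (if s = 0 then \<Sum>k<n. v k * e k else 0)" for s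
  define M where "M = mat n n (\<lambda>(r, s). c * (if r = s then 1 else 0) + q * (v r * v s))"
  define P where "P = mat n n (\<lambda>(r, k). (if r = k then 1 else 0) + (if k = 0 then e r else 0))"
  define Q where "Q = mat n n (\<lambda>(r, k). (if r = k then 1 else 0) - (if k = 0 then e r else 0))"
  define T where "T = mat n n (\<lambda>(r, s). c * (if r = s then 1 else 0) + (if r = 0 then q * w s else 0))"
  have e0: "e 0 = 0" and v_e: "v r = (if r = 0 then 1 else 0) + e r" for r
    using v0 by (simp_all add: e_def)
  have carrier: "{M, T, P, Q} \<subseteq> carrier_mat n n"
    by (simp add: M_def T_def P_def Q_def)
  have PQ: "P * Q = 1\<^sub>m n" "Q * P = 1\<^sub>m n"
    unfolding P_def Q_def using e0 by (rule one_plus_column_zero_mult_inverse)+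
  have "M * P = P * T"
  proof (rule eq_matI)
    fix r s assume "r < dim_row (P * T)" "s < dim_col (P * T)"
    then have rs: "r < n" "s < n"
      by (simp_all add: P_def T_def)
    have "(M * P) $$ (r, s) = c * ((if r = s then 1 else 0) + (if s = 0 then e r else 0)) + q * v r * w s"
      unfolding M_def P_def w_def using rs e0 v0
      by (subst index_mult_mat_mat) (auto simp: algebra_simps sum.distrib sum_distrib_left
          if_distrib[of "\<lambda>x. x * _"] if_distrib[of "\<lambda>x. _ * x"] cong: if_cong)
    also have "\<dots> = (P * T) $$ (r, s)"
      unfolding P_def T_def using rs e0
      by (subst index_mult_mat_mat) (auto simp: v_e[of r] algebra_simps sum.distrib
          if_distrib[of "\<lambda>x. x * _"] if_distrib[of "\<lambda>x. _ * x"] cong: if_cong)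
    finally show "(M * P) $$ (r, s) = (P * T) $$ (r, s)" .
  qed (simp_all add: M_def P_def T_def)
  then have "M = P * T * Q"
    using carrier PQ(1) by (metis assoc_mult_mat insert_subset right_mult_one_mat)
  then show "similar_mat M T"
    using carrier PQ by (intro similar_matI) auto
  show "T \<in> carrier_mat n n" "upper_triangular T"
    by (auto simp: T_def upper_triangular_def)
  show "T $$ (0, 0) = c + q * (\<Sum>k<n. v k * v k)"
    using n v0 by (simp add: T_def w_def e_def sum.remove[of "{..<n}" 0] if_distrib cong: if_cong)
  show "\<And>i. 0 < i \<Longrightarrow> i < n \<Longrightarrow> T $$ (i, i) = c"
    by (simp add: T_def)
qed

lemma vn_entropy_scalar_plus_rank_one:
  fixes c q :: complex
  assumes "0 < n" "v 0 = 1"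
  shows "vn_entropy (mat n n (\<lambda>(r, s). c * (if r = s then 1 else 0) + q * (v r * v s)))
    = ent_term (Re (c + q * (\<Sum>k<n. v k * v k))) + (real n - 1) * ent_term (Re c)"
proof -
  obtain T where sim: "similar_mat (mat n n (\<lambda>(r, s). c * (if r = s then 1 else 0) + q * (v r * v s))) T"
    and T: "T \<in> carrier_mat n n" "upper_triangular T"
    and T00: "T $$ (0, 0) = c + q * (\<Sum>k<n. v k * v k)"
    and Tii: "\<And>i. 0 < i \<Longrightarrow> i < n \<Longrightarrow> T $$ (i, i) = c"
    using scalar_plus_rank_one_similar_upper_triangular[where v = v and c = c and q = q, OF assms]
    by blast
  have "vn_entropy (mat n n (\<lambda>(r, s). c * (if r = s then 1 else 0) + q * (v r * v s)))
      = (\<Sum>i<n. ent_term (Re (T $$ (i, i))))"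
    using vn_entropy_similar[OF sim] vn_entropy_upper_triangular[OF T] by simp
  also have "\<dots> = ent_term (Re (T $$ (0, 0))) + (\<Sum>i\<in>{..<n} - {0}. ent_term (Re c))"
    using assms(1) Tii by (simp add: sum.remove[of "{..<n}" 0])
  finally show ?thesis
    using assms(1) T00 by simp
qed

lemma card_diagonal_pair_indices: "card {k. k < d * d \<and> k div d = k mod d} = d"
proof -
  have "{k. k < d * d \<and> k div d = k mod d} = (\<lambda>a. a * d + a) ` {..<d}"
  proof (intro equalityI subsetI)
    fix k assume "k \<in> {k. k < d * d \<and> k div d = k mod d}"
    then have k: "k < d * d" "k div d = k mod d"
      by simp_all
    have "k div d < d"
      using k(1) by (rule less_mult_imp_div_less)
    moreover have "k = k div d * d + k div d"
      using k(2) by (metis div_mult_mod_eq)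
    ultimately show "k \<in> (\<lambda>a. a * d + a) ` {..<d}"
      by blast
  qed (auto simp: pair_index_less)
  moreover have "inj_on (\<lambda>a. a * d + a) {..<d}"
    by (auto intro!: inj_onI simp: pair_index_eq_iff)
  ultimately show ?thesis
    by (simp add: card_image)
qed

lemma vn_entropy_iso_state:
  assumes "d > 0"
  shows "vn_entropy (iso_state d p) = ent_term ((1 + ((real d)\<^sup>2 - 1) * p) / (real d)\<^sup>2)
    + ((real d)\<^sup>2 - 1) * ent_term ((1 - p) / (real d)\<^sup>2)"
proof -
  define v :: "nat \<Rightarrow> complex" where "v r = of_bool (r div d = r mod d)" for r
  have "iso_state d p = mat (d * d) (d * d) (\<lambda>(r, s). complex_of_real ((1 - p) / (real d)\<^sup>2)
      * (if r = s then 1 else 0) + complex_of_real (p / d) * (v r * v s))"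
    by (auto simp: iso_state_def v_def intro!: cong_mat)
  moreover have "(\<Sum>k<d * d. v k * v k) = of_nat d"
    by (simp add: v_def Int_def card_diagonal_pair_indices)
  moreover have "0 < d * d" "v 0 = 1"
    using assms by (simp_all add: v_def)
  ultimately have "vn_entropy (iso_state d p) = ent_term (Re (complex_of_real ((1 - p) / (real d)\<^sup>2)
        + complex_of_real (p / d) * of_nat d)) + (real (d * d) - 1) * ent_term ((1 - p) / (real d)\<^sup>2)"
    by (simp only: vn_entropy_scalar_plus_rank_one Re_complex_of_real)
  also have "Re (complex_of_real ((1 - p) / (real d)\<^sup>2) + complex_of_real (p / d) * of_nat d)
      = (1 + ((real d)\<^sup>2 - 1) * p) / (real d)\<^sup>2"
    using assms by (simp add: field_simps power2_eq_square)
  finally show ?thesis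
    by (simp add: power2_eq_square)
qed

lemma ptrace_B_iso_state:
  "ptrace_B d (iso_state d p) = mat d d (\<lambda>(a, a'). if a = a' then 1 / of_nat d else 0)"
  by (auto intro!: cong_mat simp: ptrace_B_def iso_state_entry sum.distrib if_if_eq_conj[symmetric];
      simp add: field_simps power2_eq_square)

lemma ptrace_A_iso_state:
  "ptrace_A d (iso_state d p) = mat d d (\<lambda>(a, a'). if a = a' then 1 / of_nat d else 0)"
  by (auto intro!: cong_mat simp: ptrace_A_def iso_state_entry sum.distrib if_if_eq_conj[symmetric];
      simp add: field_simps power2_eq_square)

lemma vn_entropy_maximally_mixed:
  assumes "d > 0"
  shows "vn_entropy (mat d d (\<lambda>(a, a'). if a = a' then 1 / of_nat d else 0)) = log 2 d"
proof -
  have "vn_entropy (mat d d (\<lambda>(a, a'). if a = a' then 1 / of_nat d else 0)) = d * ent_term (1 / d)"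
    by (subst vn_entropy_upper_triangular[where n = d]) (auto simp: upper_triangular_def)
  then show ?thesis
    using mult_ent_term_inverse[of "real d"] assms by simp
qed

lemma quantum_MI_iso_state:
  assumes "d > 0"
  shows "quantum_MI d (iso_state d p) = 2 * log 2 d
    - (ent_term ((1 + ((real d)\<^sup>2 - 1) * p) / (real d)\<^sup>2) + ((real d)\<^sup>2 - 1) * ent_term ((1 - p) / (real d)\<^sup>2))"
  using assms by (simp add: quantum_MI_def ptrace_A_iso_state ptrace_B_iso_state
      vn_entropy_maximally_mixed vn_entropy_iso_state)

section \<open>The entropy inequality\<close>

definition xlnx :: "real \<Rightarrow> real" where
  "xlnx x = x * ln x"

lemma ln_2_mult_ent_term_divide:
  assumes "0 \<le> y" "0 < N"
  shows "ln 2 * ent_term (y / N) = y / N * ln N - xlnx y / N"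
  using assms by (cases "y = 0") (auto simp: ent_term_def xlnx_def log_def ln_div field_simps)

lemma continuous_on_xlnx: "continuous_on {0..} xlnx"
proof -
  have "(xlnx \<longlongrightarrow> 0) (at_right 0)"
    unfolding xlnx_def[abs_def] by real_asymp
  then have "continuous (at 0 within {0..}) xlnx"
    by (simp add: continuous_within at_within_Ici_at_right xlnx_def)
  moreover have "isCont xlnx x" if "x > 0" for x
    using that unfolding xlnx_def by (intro continuous_intros) auto
  ultimately show ?thesis
    unfolding continuous_on_eq_continuous_within
    by (metis atLeast_iff continuous_at_imp_continuous_at_within order_le_less)
qed

lemma continuous_on_xlnx_comp [continuous_intros]:
  assumes "continuous_on S g" "\<And>x. x \<in> S \<Longrightarrow> 0 \<le> g x"
  shows "continuous_on S (\<lambda>x. xlnx (g x))"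
  using continuous_on_compose2[OF continuous_on_xlnx assms(1)] assms(2) by auto

lemma xlnx_chain [derivative_intros]:
  assumes "(f has_real_derivative f') (at x)" "0 < f x"
  shows "((\<lambda>x. xlnx (f x)) has_real_derivative f' * (ln (f x) + 1)) (at x)"
  unfolding xlnx_def using assms by (auto intro!: derivative_eq_intros simp: field_simps)

lemma le_min_endpoints_if_deriv_antimono:
  fixes f f' :: "real \<Rightarrow> real"
  assumes cont: "continuous_on {a..b} f"
    and deriv: "\<And>x. a < x \<Longrightarrow> x < b \<Longrightarrow> (f has_real_derivative f' x) (at x)"
    and antimono: "\<And>x y. a < x \<Longrightarrow> x \<le> y \<Longrightarrow> y < b \<Longrightarrow> f' y \<le> f' x"
    and x: "a \<le> x" "x \<le> b"
  shows "min (f a) (f b) \<le> f x"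
proof (cases "a < x \<and> x < b")
  case True
  show ?thesis
  proof (cases "0 \<le> f' x")
    case nonneg: True
    have "f a \<le> f x"
    proof (rule DERIV_nonneg_imp_increasing_open[OF x(1)])
      fix z assume "a < z" "z < x"
      then show "\<exists>y. (f has_real_derivative y) (at z) \<and> 0 \<le> y"
        using True deriv antimono[of z x] nonneg by (intro exI[of _ "f' z"]) auto
    qed (rule continuous_on_subset[OF cont], use x in auto)
    then show ?thesis
      by simp
  next
    case neg: False
    have "f b \<le> f x"
    proof (rule DERIV_nonpos_imp_decreasing_open[OF x(2)])
      fix z assume "x < z" "z < b"
      then show "\<exists>y. (f has_real_derivative y) (at z) \<and> y \<le> 0"
        using True deriv antimono[of x z] neg by (intro exI[of _ "f' z"]) auto
    qed (rule continuous_on_subset[OF cont], use x in auto)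
    then show ?thesis
      by simp
  qed
qed (use x in \<open>auto simp: min_def\<close>)

lemma ge_critical_point_if_deriv_mono:
  fixes f f' :: "real \<Rightarrow> real"
  assumes cont: "continuous_on {a..b} f"
    and deriv: "\<And>x. a < x \<Longrightarrow> x < b \<Longrightarrow> (f has_real_derivative f' x) (at x)"
    and mono: "\<And>x y. a < x \<Longrightarrow> x \<le> y \<Longrightarrow> y < b \<Longrightarrow> f' x \<le> f' y"
    and c: "a < c" "c < b" "f' c = 0"
    and x: "a \<le> x" "x \<le> b"
  shows "f c \<le> f x"
proof (cases "x \<le> c")
  case True
  show ?thesis
  proof (rule DERIV_nonpos_imp_decreasing_open[of x c f, OF True])
    fix z assume "x < z" "z < c"
    then show "\<exists>y. (f has_real_derivative y) (at z) \<and> y \<le> 0"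
      using c x deriv mono[of z c] by (intro exI[of _ "f' z"]) auto
  qed (rule continuous_on_subset[OF cont], use c x in auto)
next
  case False
  show ?thesis
  proof (rule DERIV_nonneg_imp_increasing_open[of c x f])
    show "c \<le> x"
      using False by simp
  next
    fix z assume "c < z" "z < x"
    then show "\<exists>y. (f has_real_derivative y) (at z) \<and> 0 \<le> y"
      using c x deriv mono[of c z] by (intro exI[of _ "f' z"]) auto
  qed (rule continuous_on_subset[OF cont], use c x in auto)
qed

text \<open>\<open>mi_gap n p\<close> is \<open>ln 2\<close> times \<open>I(A:B) - I(M\<^sub>1) - I(M\<^sub>2)\<close> for the isotropic state with
  \<open>d = n\<close>, written in the unnormalised eigenvalues \<open>1 + (n\<^sup>2 - 1) p\<close>, \<open>1 - p\<close> of \<open>n\<^sup>2 \<rho>\<close>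
  and \<open>1 + (n - 1) p\<close>, \<open>1 - p\<close> of the measured distributions; \<open>mi_gap'\<close> is its derivative in \<open>p\<close>.\<close>
definition mi_gap :: "real \<Rightarrow> real \<Rightarrow> real" where
  "mi_gap n p = (xlnx (1 + (n\<^sup>2 - 1) * p) + (n\<^sup>2 - 1) * xlnx (1 - p)) / n\<^sup>2
     - 2 * (xlnx (1 + (n - 1) * p) + (n - 1) * xlnx (1 - p)) / n"

definition mi_gap' :: "real \<Rightarrow> real \<Rightarrow> real" where
  "mi_gap' n p = (n\<^sup>2 - 1) / n\<^sup>2 * (ln (1 + (n\<^sup>2 - 1) * p) - ln (1 - p))
     - 2 * (n - 1) / n * (ln (1 + (n - 1) * p) - ln (1 - p))"

definition mi_gap'' :: "real \<Rightarrow> real \<Rightarrow> real" where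
  "mi_gap'' n p = (n - 1)\<^sup>2 * (1 - (n + 1) * p) / ((1 + (n\<^sup>2 - 1) * p) * (1 - p) * (1 + (n - 1) * p))"

lemma gt_neg_inverse_iff:
  fixes n p :: real
  assumes "2 \<le> n"
  shows "- 1 / (n\<^sup>2 - 1) < p \<longleftrightarrow> 0 < 1 + (n\<^sup>2 - 1) * p"
    and "- 1 / (n\<^sup>2 - 1) \<le> p \<longleftrightarrow> 0 \<le> 1 + (n\<^sup>2 - 1) * p"
proof -
  have "2\<^sup>2 \<le> n\<^sup>2"
    using assms by (intro power_mono) auto
  then have "0 < n\<^sup>2 - 1"
    by simp
  then show "- 1 / (n\<^sup>2 - 1) < p \<longleftrightarrow> 0 < 1 + (n\<^sup>2 - 1) * p"
    and "- 1 / (n\<^sup>2 - 1) \<le> p \<longleftrightarrow> 0 \<le> 1 + (n\<^sup>2 - 1) * p"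
    by (simp_all add: field_simps)
qed

lemma le_affine_smaller_slope:
  fixes n p :: real
  assumes "2 \<le> n"
  shows "min 1 (1 + (n\<^sup>2 - 1) * p) \<le> 1 + (n - 1) * p"
proof (cases "0 \<le> p")
  case True
  then show ?thesis
    using assms by simp
next
  case False
  have "n - 1 \<le> n\<^sup>2 - 1"
    using assms by (simp add: power2_eq_square)
  then have "(n\<^sup>2 - 1) * p \<le> (n - 1) * p"
    using False by (intro mult_right_mono_neg) auto
  then show ?thesis
    by linarith
qed

lemma weighted_reciprocal_sum:
  fixes m u v :: real
  assumes "0 < u" "0 < v" "m \<noteq> 0" "(m - 1) * v + u = m"
  shows "(m - 1) / m * ((m - 1) / u + 1 / v) = (m - 1) / (u * v)"
proof -
  have "(m - 1) / u + 1 / v = ((m - 1) * v + u) / (u * v)"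
    using assms by (simp add: field_simps)
  then show ?thesis
    using assms by simp
qed

lemma mi_gap_has_derivative:
  fixes n p :: real
  assumes "2 \<le> n" "0 < 1 + (n\<^sup>2 - 1) * p" "p < 1"
  shows "(mi_gap n has_real_derivative mi_gap' n p) (at p)"
proof -
  have "0 < 1 + (n - 1) * p"
    using le_affine_smaller_slope[of n p] assms by linarith
  then show ?thesis
    unfolding mi_gap_def[abs_def] mi_gap'_def using assms
    by (auto intro!: derivative_eq_intros simp: field_simps)
qed

lemma mi_gap'_has_derivative:
  fixes n p :: real
  assumes n: "2 \<le> n" and p: "0 < 1 + (n\<^sup>2 - 1) * p" "p < 1"
  shows "(mi_gap' n has_real_derivative mi_gap'' n p) (at p)"
proof -
  define u v w where "u = 1 + (n\<^sup>2 - 1) * p" and "v = 1 - p" and "w = 1 + (n - 1) * p"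
  have pos: "0 < u" "0 < v" "0 < w" "n \<noteq> 0"
    using le_affine_smaller_slope[of n p] assms by (simp_all add: u_def v_def w_def)
  have "(mi_gap' n has_real_derivative
      (n\<^sup>2 - 1) / n\<^sup>2 * ((n\<^sup>2 - 1) / u + 1 / v) - 2 * (n - 1) / n * ((n - 1) / w + 1 / v)) (at p)"
    using pos unfolding mi_gap'_def[abs_def] u_def v_def w_def
    by (auto intro!: derivative_eq_intros simp: divide_inverse algebra_simps)
  moreover have "(n\<^sup>2 - 1) / n\<^sup>2 * ((n\<^sup>2 - 1) / u + 1 / v) - 2 * (n - 1) / n * ((n - 1) / w + 1 / v)
      = mi_gap'' n p"
  proof -
    have first: "(n\<^sup>2 - 1) / n\<^sup>2 * ((n\<^sup>2 - 1) / u + 1 / v) = (n\<^sup>2 - 1) / (u * v)"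
      by (rule weighted_reciprocal_sum) (use pos in \<open>simp_all add: u_def v_def algebra_simps\<close>)
    have second: "(n - 1) / n * ((n - 1) / w + 1 / v) = (n - 1) / (w * v)"
      by (rule weighted_reciprocal_sum) (use pos in \<open>simp_all add: w_def v_def algebra_simps\<close>)
    have "(n\<^sup>2 - 1) / n\<^sup>2 * ((n\<^sup>2 - 1) / u + 1 / v) - 2 * (n - 1) / n * ((n - 1) / w + 1 / v)
        = (n\<^sup>2 - 1) / (u * v) - 2 * ((n - 1) / n * ((n - 1) / w + 1 / v))"
      unfolding first by simp
    also have "\<dots> = (n\<^sup>2 - 1) / (u * v) - 2 * ((n - 1) / (w * v))"
      unfolding second ..
    also have "\<dots> = ((n\<^sup>2 - 1) * w - 2 * (n - 1) * u) / (u * v * w)"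
      using pos by (simp add: field_simps)
    also have "(n\<^sup>2 - 1) * w - 2 * (n - 1) * u = (n - 1)\<^sup>2 * (1 - (n + 1) * p)"
      by (simp add: u_def w_def algebra_simps power2_eq_square)
    finally show ?thesis
      by (simp add: mi_gap''_def u_def v_def w_def)
  qed
  ultimately show ?thesis
    by simp
qed

lemma mi_gap''_nonneg:
  fixes n p :: real
  assumes "2 \<le> n" "0 < 1 + (n\<^sup>2 - 1) * p" "p \<le> 1 / (n + 1)"
  shows "0 \<le> mi_gap'' n p"
proof -
  have "1 / (n + 1) < 1"
    using assms by simp
  then have "p < 1"
    using assms by linarith
  moreover have "(n + 1) * p \<le> 1"
    using assms by (simp add: field_simps)
  moreover have "0 < 1 + (n - 1) * p"
    using le_affine_smaller_slope[of n p] assms by simp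
  ultimately show ?thesis
    using assms unfolding mi_gap''_def by (intro divide_nonneg_pos) auto
qed

lemma mi_gap''_nonpos:
  fixes n p :: real
  assumes "2 \<le> n" "1 / (n + 1) \<le> p" "p < 1"
  shows "mi_gap'' n p \<le> 0"
proof -
  have "0 < 1 / (n + 1)"
    using assms by simp
  then have "0 < p"
    using assms by linarith
  moreover have "1 \<le> (n + 1) * p"
    using assms by (simp add: field_simps)
  moreover have "0 < n\<^sup>2 - 1"
    using one_less_power[of n 2] assms by simp
  ultimately show ?thesis
    using assms unfolding mi_gap''_def
    by (intro divide_nonpos_pos mult_nonneg_nonpos mult_pos_pos add_pos_nonneg) auto
qed

lemma mi_gap'_mono:
  fixes n x y :: real
  assumes n: "2 \<le> n" and x: "0 < 1 + (n\<^sup>2 - 1) * x" and xy: "x \<le> y" and y: "y \<le> 1 / (n + 1)"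
  shows "mi_gap' n x \<le> mi_gap' n y"
proof -
  have "0 \<le> n\<^sup>2 - 1" "1 / (n + 1) < 1"
    using one_less_power[of n 2] n by simp_all
  have dom: "0 < 1 + (n\<^sup>2 - 1) * z" "z < 1" "z \<le> 1 / (n + 1)" if "z \<in> {x..y}" for z
  proof -
    have "(n\<^sup>2 - 1) * x \<le> (n\<^sup>2 - 1) * z"
      using that \<open>0 \<le> n\<^sup>2 - 1\<close> by (intro mult_left_mono) simp_all
    then show "0 < 1 + (n\<^sup>2 - 1) * z"
      using x by linarith
    show "z \<le> 1 / (n + 1)" "z < 1"
      using that y \<open>1 / (n + 1) < 1\<close> by auto
  qed
  have "(mi_gap' n has_real_derivative mi_gap'' n z) (at z)" "0 \<le> mi_gap'' n z" if "z \<in> {x..y}" for z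
    using dom[OF that] by (simp_all add: mi_gap'_has_derivative[OF n] mi_gap''_nonneg[OF n])
  then show ?thesis
    using xy by (rule deriv_nonneg_imp_mono)
qed

lemma mi_gap'_antimono:
  fixes n x y :: real
  assumes n: "2 \<le> n" and x: "1 / (n + 1) \<le> x" and xy: "x \<le> y" and y: "y < 1"
  shows "mi_gap' n y \<le> mi_gap' n x"
proof -
  have "0 \<le> n\<^sup>2 - 1" "0 < 1 / (n + 1)"
    using one_less_power[of n 2] n by simp_all
  have dom: "0 < 1 + (n\<^sup>2 - 1) * z" "z < 1" "1 / (n + 1) \<le> z" if "z \<in> {x..y}" for z
  proof -
    show "z < 1" "1 / (n + 1) \<le> z"
      using that x y by auto
    then have "0 < z"
      using \<open>0 < 1 / (n + 1)\<close> by linarith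
    then show "0 < 1 + (n\<^sup>2 - 1) * z"
      using \<open>0 \<le> n\<^sup>2 - 1\<close> by (intro add_pos_nonneg mult_nonneg_nonneg) simp_all
  qed
  have "(mi_gap' n has_real_derivative mi_gap'' n z) (at z)" "mi_gap'' n z \<le> 0" if "z \<in> {x..y}" for z
    using dom[OF that] by (simp_all add: mi_gap'_has_derivative[OF n] mi_gap''_nonpos[OF n])
  then show ?thesis
    using xy by (rule deriv_nonpos_imp_antimono)
qed

lemma continuous_on_mi_gap:
  fixes n :: real
  assumes "2 \<le> n"
  shows "continuous_on {- 1 / (n\<^sup>2 - 1)..1} (mi_gap n)"
proof -
  have "0 \<le> 1 + (n\<^sup>2 - 1) * p" "0 \<le> 1 + (n - 1) * p" "0 \<le> 1 - p"
    if "p \<in> {- 1 / (n\<^sup>2 - 1)..1}" for p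
    using that gt_neg_inverse_iff(2)[OF assms, of p] le_affine_smaller_slope[OF assms, of p] by auto
  then show ?thesis
    unfolding mi_gap_def[abs_def] using assms
    by (intro continuous_on_diff continuous_on_divide continuous_on_add continuous_on_mult
        continuous_on_xlnx_comp continuous_on_const continuous_on_id) auto
qed

lemma mi_gap_0: "mi_gap n 0 = 0" and mi_gap'_0: "mi_gap' n 0 = 0"
  by (simp_all add: mi_gap_def mi_gap'_def xlnx_def)

lemma mi_gap_1:
  fixes n :: real
  assumes "0 < n"
  shows "mi_gap n 1 = 0"
  using assms by (simp add: mi_gap_def xlnx_def ln_realpow)

text \<open>Up to \<open>1 / (n + 1)\<close> the function \<open>mi_gap n\<close> is convex, with the critical point \<open>0\<close>.\<close>
lemma mi_gap_nonneg_convex_part: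
  fixes n x :: real
  assumes n: "2 \<le> n" and x: "- 1 / (n\<^sup>2 - 1) \<le> x" "x \<le> 1 / (n + 1)"
  shows "0 \<le> mi_gap n x"
proof -
  let ?a = "- 1 / (n\<^sup>2 - 1)" and ?b = "1 / (n + 1)"
  have ab: "?a < 0" "0 < ?b" "?b < 1"
    using n one_less_power[of n 2] by simp_all
  then have "?a \<le> ?b"
    by linarith
  then have subset: "{?a..?b} \<subseteq> {?a..1}"
    using ab(3) by auto
  have "mi_gap n 0 \<le> mi_gap n x"
  proof (rule ge_critical_point_if_deriv_mono[where f = "mi_gap n" and f' = "mi_gap' n" and a = ?a and b = ?b])
    show "continuous_on {?a..?b} (mi_gap n)"
      using continuous_on_mi_gap[OF n] subset by (rule continuous_on_subset)
    show "(mi_gap n has_real_derivative mi_gap' n z) (at z)" if "?a < z" "z < ?b" for z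
      using gt_neg_inverse_iff(1)[OF n] that ab(3) by (intro mi_gap_has_derivative[OF n]) simp_all
    show "mi_gap' n z \<le> mi_gap' n z'" if "?a < z" "z \<le> z'" "z' < ?b" for z z'
    proof (rule mi_gap'_mono[OF n])
      show "0 < 1 + (n\<^sup>2 - 1) * z"
        using that(1) gt_neg_inverse_iff(1)[OF n] by simp
    qed (use that in auto)
  qed (use ab x in \<open>simp_all only: mi_gap'_0\<close>)
  then show ?thesis
    by (simp add: mi_gap_0)
qed

text \<open>Beyond \<open>1 / (n + 1)\<close> it is concave, hence bounded below by its values at the endpoints.\<close>
lemma mi_gap_nonneg:
  fixes n p :: real
  assumes n: "2 \<le> n" and p: "- 1 / (n\<^sup>2 - 1) \<le> p" "p \<le> 1"
  shows "0 \<le> mi_gap n p"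
proof (cases "p \<le> 1 / (n + 1)")
  case True
  then show ?thesis
    using mi_gap_nonneg_convex_part[OF n p(1)] by simp
next
  case False
  let ?a = "- 1 / (n\<^sup>2 - 1)" and ?b = "1 / (n + 1)"
  have ab: "?a < 0" "0 < ?b"
    using n one_less_power[of n 2] by simp_all
  then have "?a \<le> ?b"
    by linarith
  then have subset: "{?b..1} \<subseteq> {?a..1}"
    by auto
  have "min (mi_gap n ?b) (mi_gap n 1) \<le> mi_gap n p"
  proof (rule le_min_endpoints_if_deriv_antimono[where f = "mi_gap n" and f' = "mi_gap' n"])
    show "continuous_on {?b..1} (mi_gap n)"
      using continuous_on_mi_gap[OF n] subset by (rule continuous_on_subset)
    show "(mi_gap n has_real_derivative mi_gap' n z) (at z)" if "?b < z" "z < 1" for z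
    proof (rule mi_gap_has_derivative[OF n _ that(2)])
      have "?a < z"
        using ab that(1) by linarith
      then show "0 < 1 + (n\<^sup>2 - 1) * z"
        using gt_neg_inverse_iff(1)[OF n] by simp
    qed
    show "mi_gap' n z' \<le> mi_gap' n z" if "?b < z" "z \<le> z'" "z' < 1" for z z'
      using that by (intro mi_gap'_antimono[OF n]) auto
  qed (use False p in linarith)+
  moreover have "0 \<le> mi_gap n ?b"
    using \<open>?a \<le> ?b\<close> by (intro mi_gap_nonneg_convex_part[OF n]) simp_all
  ultimately show ?thesis
    using mi_gap_1[of n] n by simp
qed

lemma ln_2_mult_ent_term_pair:
  fixes y z m M N :: real
  assumes "0 \<le> y" "0 \<le> z" "0 < N" "y + m * z = M"
  shows "ln 2 * (ent_term (y / N) + m * ent_term (z / N)) = M / N * ln N - (xlnx y + m * xlnx z) / N"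
  using assms(3) unfolding assms(4)[symmetric] distrib_left mult.left_commute[of "ln 2" m]
    ln_2_mult_ent_term_divide[OF assms(1,3)] ln_2_mult_ent_term_divide[OF assms(2,3)]
  by (simp add: field_simps)

lemma isotropic_entropy_inequality:
  fixes r p :: real
  assumes r: "2 \<le> r" and p: "- 1 / (r\<^sup>2 - 1) \<le> p" "p \<le> 1"
  shows "2 * (2 * log 2 r - r * (ent_term ((1 + (r - 1) * p) / r\<^sup>2) + (r - 1) * ent_term ((1 - p) / r\<^sup>2)))
    \<le> 2 * log 2 r - (ent_term ((1 + (r\<^sup>2 - 1) * p) / r\<^sup>2) + (r\<^sup>2 - 1) * ent_term ((1 - p) / r\<^sup>2))"
proof -
  define u v w where "u = 1 + (r\<^sup>2 - 1) * p" and "v = 1 - p" and "w = 1 + (r - 1) * p"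
  have nonneg: "0 \<le> u" "0 \<le> v" "0 \<le> w"
    using gt_neg_inverse_iff(2)[OF r] le_affine_smaller_slope[OF r, of p] p
    by (auto simp: u_def v_def w_def)
  have r0: "0 < r\<^sup>2" "ln (r\<^sup>2) = 2 * ln r"
    using r by (simp_all add: ln_realpow)
  let ?Q = "2 * log 2 r - (ent_term (u / r\<^sup>2) + (r\<^sup>2 - 1) * ent_term (v / r\<^sup>2))"
    and ?C = "2 * log 2 r - r * (ent_term (w / r\<^sup>2) + (r - 1) * ent_term (v / r\<^sup>2))"
  have Q: "ln 2 * ?Q = (xlnx u + (r\<^sup>2 - 1) * xlnx v) / r\<^sup>2"
    using ln_2_mult_ent_term_pair[OF nonneg(1,2) r0(1), of "r\<^sup>2 - 1" "r\<^sup>2"] r0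
    by (simp add: u_def v_def log_def right_diff_distrib algebra_simps)
  have C: "ln 2 * ?C = (xlnx w + (r - 1) * xlnx v) / r"
  proof -
    have "ln 2 * (ent_term (w / r\<^sup>2) + (r - 1) * ent_term (v / r\<^sup>2))
        = r / r\<^sup>2 * ln (r\<^sup>2) - (xlnx w + (r - 1) * xlnx v) / r\<^sup>2"
      by (rule ln_2_mult_ent_term_pair[OF nonneg(3,2) r0(1)]) (simp add: w_def v_def algebra_simps)
    moreover have "ln 2 * ?C = 2 * ln r - r * (ln 2 * (ent_term (w / r\<^sup>2) + (r - 1) * ent_term (v / r\<^sup>2)))"
      by (simp add: log_def algebra_simps)
    ultimately show ?thesis
      using r r0 by (simp add: field_simps power2_eq_square)
  qed
  have "ln 2 * (?Q - 2 * ?C) = ln 2 * ?Q - 2 * (ln 2 * ?C)"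
    by (simp add: algebra_simps)
  also have "\<dots> = mi_gap r p"
    unfolding Q C by (simp add: mi_gap_def u_def v_def w_def)
  finally have "ln 2 * (?Q - 2 * ?C) = mi_gap r p" .
  then have "0 \<le> ln 2 * (?Q - 2 * ?C)"
    using mi_gap_nonneg[OF r p] by simp
  then have "0 \<le> ?Q - 2 * ?C"
    by (simp add: zero_le_mult_iff)
  then show ?thesis
    unfolding u_def v_def w_def by linarith
qed

theorem mainTheorem6:
  fixes d :: nat and p :: real
  assumes "prime d" and "d \<ge> 3"
    and "- 1 / (real d ^ 2 - 1) \<le> p" and "p \<le> 1"
  shows "quantum_MI d (iso_state d p) \<ge> (\<Sum>i\<in>{1..d+1}. classical_MI d (iso_state d p) i)
    \<and> (\<Sum>i\<in>{1..d+1}. classical_MI d (iso_state d p) i)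
        \<ge> Min {(\<Sum>i\<in>S. classical_MI d (iso_state d p) i) | S. S \<subseteq> {1..d+1} \<and> card S = d}"
proof -
  let ?I = "classical_MI d (iso_state d p)"
  have d: "0 < d" "2 < d"
    using assms(2) by simp_all
  have quadratic_phase: "?I i = 0" if "i \<in> {3..d+1}" for i
    using that assms(1) d by (intro classical_MI_iso_state_quadratic_phase) auto
  have "{1..d+1} = {1, 2} \<union> {3..d+1}"
    using d by auto
  then have "(\<Sum>i\<in>{1..d+1}. ?I i) = ?I 1 + ?I 2"
    using quadratic_phase by (simp add: sum.union_disjoint)
  also have "\<dots> \<le> quantum_MI d (iso_state d p)"
    using isotropic_entropy_inequality[of "real d" p] assms(3,4) d
    by (simp add: quantum_MI_iso_state classical_MI_iso_state_computational_fourier)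
  finally have "(\<Sum>i\<in>{1..d+1}. ?I i) \<le> quantum_MI d (iso_state d p)" .
  moreover have "Min {(\<Sum>i\<in>S. ?I i) | S. S \<subseteq> {1..d+1} \<and> card S = d} \<le> (\<Sum>i\<in>{1..d+1}. ?I i)"
    using Min_sums_card_minus_one_le_sum[of "{1..d+1}" 3 ?I] quadratic_phase[of 3] d by simp
  ultimately show ?thesis
    by simp
qed

end
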